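(* Let $\mathsf{T}$ be a rooted plane tree. The ornamentation lattice $\mathcal{O}(\mathsf{T})$ is semidistributive.
   Context: A rooted plane tree $\mathsf{T}$ is a finite tree with a distinguished root, regarded as a poset in which $v'\leq v$ iff $v$ lies on the path from $v'$ to the root. An ornament is a nonempty set of nodes inducing a connected subgraph; an ornamentation is a map $\delta$ from nodes to ornaments such that the unique maximal element of $\delta(v)$ is $v$ and any two sets $\delta(v),\delta(v')$ are nested or disjoint. $\mathcal{O}(\mathsf{T})$ is the set of ornamentations ordered by $\delta\leq\delta'$ iff $\delta(v)\subseteq\delta'(v)$ for all $v$ (a lattice). A finite lattice $L$ is semidistributive if for all $a\leq b$ in $L$, the set $\{z\in L:z\wedge b=a\}$ has a maximum element and the set $\{z\in L:z\vee a=b\}$ has a minimum element. *)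

theory Defs
  imports Main
begin

text \<open>A rooted tree: finite node set V, root r, parent map p (used on V - {r});
  every node reaches the root by iterating p. The plane (child ordering) structure
  plays no role for ornamentations and is omitted.\<close>

definition rooted_tree :: "'a set \<Rightarrow> 'a \<Rightarrow> ('a \<Rightarrow> 'a) \<Rightarrow> bool" where
  "rooted_tree V r p \<longleftrightarrow> finite V \<and> r \<in> V \<and> (\<forall>v\<in>V - {r}. p v \<in> V)
     \<and> (\<forall>v\<in>V. \<exists>k. (p ^^ k) v = r \<and> (\<forall>j<k. (p ^^ j) v \<noteq> r))"

definition tree_edges :: "'a set \<Rightarrow> 'a \<Rightarrow> ('a \<Rightarrow> 'a) \<Rightarrow> ('a \<times> 'a) set" where
  "tree_edges V r p = {(v, p v) | v. v \<in> V \<and> v \<noteq> r}"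

definition tree_le :: "'a set \<Rightarrow> 'a \<Rightarrow> ('a \<Rightarrow> 'a) \<Rightarrow> 'a \<Rightarrow> 'a \<Rightarrow> bool" where
  "tree_le V r p x y \<longleftrightarrow> x \<in> V \<and> y \<in> V \<and> (x, y) \<in> (tree_edges V r p)\<^sup>*"

definition ornament :: "'a set \<Rightarrow> 'a \<Rightarrow> ('a \<Rightarrow> 'a) \<Rightarrow> 'a set \<Rightarrow> bool" where
  "ornament V r p S \<longleftrightarrow> S \<noteq> {} \<and> S \<subseteq> V \<and>
     (\<forall>x\<in>S. \<forall>y\<in>S. (x, y) \<in> ((tree_edges V r p \<union> (tree_edges V r p)\<inverse>) \<inter> (S \<times> S))\<^sup>*)"

definition ornamentation :: "'a set \<Rightarrow> 'a \<Rightarrow> ('a \<Rightarrow> 'a) \<Rightarrow> ('a \<Rightarrow> 'a set) \<Rightarrow> bool" where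
  "ornamentation V r p \<delta> \<longleftrightarrow>
     (\<forall>v\<in>V. ornament V r p (\<delta> v) \<and>
        {u \<in> \<delta> v. \<forall>w\<in>\<delta> v. tree_le V r p u w \<longrightarrow> w = u} = {v}) \<and>
     (\<forall>v\<in>V. \<forall>v'\<in>V. \<delta> v \<subseteq> \<delta> v' \<or> \<delta> v' \<subseteq> \<delta> v \<or> \<delta> v \<inter> \<delta> v' = {}) \<and>
     (\<forall>v. v \<notin> V \<longrightarrow> \<delta> v = {})"

definition ornamentations :: "'a set \<Rightarrow> 'a \<Rightarrow> ('a \<Rightarrow> 'a) \<Rightarrow> ('a \<Rightarrow> 'a set) set" where
  "ornamentations V r p = {\<delta>. ornamentation V r p \<delta>}"

definition orn_le :: "'a set \<Rightarrow> ('a \<Rightarrow> 'a set) \<Rightarrow> ('a \<Rightarrow> 'a set) \<Rightarrow> bool" where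
  "orn_le V \<delta> \<delta>' \<longleftrightarrow> (\<forall>v\<in>V. \<delta> v \<subseteq> \<delta>' v)"

definition is_meet :: "'b set \<Rightarrow> ('b \<Rightarrow> 'b \<Rightarrow> bool) \<Rightarrow> 'b \<Rightarrow> 'b \<Rightarrow> 'b \<Rightarrow> bool" where
  "is_meet L le x y m \<longleftrightarrow> m \<in> L \<and> le m x \<and> le m y \<and> (\<forall>z\<in>L. le z x \<and> le z y \<longrightarrow> le z m)"

definition is_join :: "'b set \<Rightarrow> ('b \<Rightarrow> 'b \<Rightarrow> bool) \<Rightarrow> 'b \<Rightarrow> 'b \<Rightarrow> 'b \<Rightarrow> bool" where
  "is_join L le x y m \<longleftrightarrow> m \<in> L \<and> le x m \<and> le y m \<and> (\<forall>z\<in>L. le x z \<and> le y z \<longrightarrow> le m z)"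

definition finite_lattice :: "'b set \<Rightarrow> ('b \<Rightarrow> 'b \<Rightarrow> bool) \<Rightarrow> bool" where
  "finite_lattice L le \<longleftrightarrow> finite L \<and> L \<noteq> {} \<and>
     (\<forall>x\<in>L. le x x) \<and> (\<forall>x\<in>L. \<forall>y\<in>L. le x y \<and> le y x \<longrightarrow> x = y) \<and>
     (\<forall>x\<in>L. \<forall>y\<in>L. \<forall>z\<in>L. le x y \<and> le y z \<longrightarrow> le x z) \<and>
     (\<forall>x\<in>L. \<forall>y\<in>L. (\<exists>m. is_meet L le x y m) \<and> (\<exists>j. is_join L le x y j))"

definition semidistributive :: "'b set \<Rightarrow> ('b \<Rightarrow> 'b \<Rightarrow> bool) \<Rightarrow> bool" where
  "semidistributive L le \<longleftrightarrow> finite_lattice L le \<and>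
     (\<forall>a\<in>L. \<forall>b\<in>L. le a b \<longrightarrow>
        (\<exists>m\<in>{z\<in>L. is_meet L le z b a}. \<forall>z\<in>{z\<in>L. is_meet L le z b a}. le z m) \<and>
        (\<exists>m\<in>{z\<in>L. is_join L le z a b}. \<forall>z\<in>{z\<in>L. is_join L le z a b}. le m z))"

end

theory Submission
  imports Defs
begin

text \<open>Ornamentations are exactly the families of subtree-shaped ornaments \<delta>(v) with top v that
  are closed under composition: w \<in> \<delta>(v) implies \<delta>(w) \<subseteq> \<delta>(v). Hence meets are pointwise
  intersections, and joins close the pointwise union under composition. For a \<le> b, both
  semidistributive laws follow by tracing chains of composition steps: for meets, convexity of
  b(v) along the tree order keeps a chain that ends in b(v) inside a(v); for joins, induction on
  the length of the tree interval from x \<in> b(u) up to u shows that x is reached from u using only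
  steps from a and from the intersection of all z with join(z, a) = b.\<close>

lemma is_meet_unique:
  assumes "\<forall>x\<in>L. \<forall>y\<in>L. le x y \<and> le y x \<longrightarrow> x = y"
    and "is_meet L le x y m" and "is_meet L le x y m'"
  shows "m = m'"
  using assms unfolding is_meet_def by blast

lemma is_join_unique:
  assumes "\<forall>x\<in>L. \<forall>y\<in>L. le x y \<and> le y x \<longrightarrow> x = y"
    and "is_join L le x y j" and "is_join L le x y j'"
  shows "j = j'"
  using assms unfolding is_join_def by blast

locale rtree =
  fixes V :: "'a set" and r :: 'a and p :: "'a \<Rightarrow> 'a"
  assumes rooted_tree: "rooted_tree V r p"
begin

abbreviation E :: "('a \<times> 'a) set" where "E \<equiv> tree_edges V r p"

abbreviation tle :: "'a \<Rightarrow> 'a \<Rightarrow> bool" (infix "\<preceq>" 50) where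
  "x \<preceq> y \<equiv> tree_le V r p x y"

lemma finite_V: "finite V"
  and parent_in_V: "v \<in> V \<Longrightarrow> v \<noteq> r \<Longrightarrow> p v \<in> V"
  and reaches_root: "v \<in> V \<Longrightarrow> \<exists>k. (p ^^ k) v = r"
  using rooted_tree unfolding rooted_tree_def by auto

lemma edge_iff: "(x, y) \<in> E \<longleftrightarrow> x \<in> V \<and> x \<noteq> r \<and> y = p x"
  unfolding tree_edges_def by auto

lemma tle_in_V: "x \<preceq> y \<Longrightarrow> x \<in> V \<and> y \<in> V"
  unfolding tree_le_def by auto

lemma tle_refl: "x \<in> V \<Longrightarrow> x \<preceq> x"
  unfolding tree_le_def by auto

lemma tle_trans: "x \<preceq> y \<Longrightarrow> y \<preceq> z \<Longrightarrow> x \<preceq> z"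
  unfolding tree_le_def by auto

lemma tle_parent: "x \<in> V \<Longrightarrow> x \<noteq> r \<Longrightarrow> x \<preceq> p x"
  unfolding tree_le_def using parent_in_V edge_iff by blast

lemma parent_tle_of_less:
  assumes "x \<preceq> y" "x \<noteq> y"
  shows "x \<noteq> r \<and> p x \<preceq> y"
proof -
  obtain z where "(x, z) \<in> E" "(z, y) \<in> E\<^sup>*"
    using assms unfolding tree_le_def by (metis converse_rtranclE)
  then show ?thesis using assms parent_in_V unfolding tree_le_def edge_iff by auto
qed

lemma cycle_parent: "(z, z) \<in> E\<^sup>+ \<Longrightarrow> z \<noteq> r \<and> (p z, p z) \<in> E\<^sup>+"
proof -
  assume "(z, z) \<in> E\<^sup>+"
  then obtain y where "(z, y) \<in> E" "(y, z) \<in> E\<^sup>*" by (meson tranclD)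
  then show ?thesis using edge_iff by (metis rtrancl_into_trancl1)
qed

lemma no_cycle: "(x, x) \<notin> E\<^sup>+"
proof
  assume cycle: "(x, x) \<in> E\<^sup>+"
  then have "x \<in> V" using edge_iff by (metis converse_tranclE)
  then obtain k where "(p ^^ k) x = r" using reaches_root by blast
  moreover have "((p ^^ k) x, (p ^^ k) x) \<in> E\<^sup>+"
    by (induction k) (use cycle cycle_parent in auto)
  ultimately show False using cycle_parent by metis
qed

lemma tle_antisym:
  assumes "x \<preceq> y" "y \<preceq> x"
  shows "x = y"
proof (rule ccontr)
  assume "x \<noteq> y"
  then have "(x, y) \<in> E\<^sup>+"
    using assms(1) unfolding tree_le_def by (metis rtrancl_eq_or_trancl)
  moreover have "(y, x) \<in> E\<^sup>*" using assms(2) unfolding tree_le_def by auto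
  ultimately show False using no_cycle by (meson trancl_rtrancl_trancl)
qed

lemma tle_upper_linear:
  assumes "z \<preceq> x" "z \<preceq> y"
  shows "x \<preceq> y \<or> y \<preceq> x"
proof -
  have "(z, x) \<in> E\<^sup>*" using assms unfolding tree_le_def by auto
  then have "\<forall>y. (z, y) \<in> E\<^sup>* \<longrightarrow> (x, y) \<in> E\<^sup>* \<or> (y, x) \<in> E\<^sup>*"
  proof (induction rule: converse_rtrancl_induct)
    case base
    then show ?case by auto
  next
    case (step z z')
    show ?case
    proof (intro allI impI)
      fix y
      assume "(z, y) \<in> E\<^sup>*"
      then consider "y = z" | "(z', y) \<in> E\<^sup>*"
        using step.hyps(1) edge_iff by (metis converse_rtranclE)
      then show "(x, y) \<in> E\<^sup>* \<or> (y, x) \<in> E\<^sup>*"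
        using step by (cases) (meson converse_rtrancl_into_rtrancl, blast)
    qed
  qed
  then show ?thesis using assms unfolding tree_le_def by auto
qed

definition ornament_at :: "'a \<Rightarrow> 'a set \<Rightarrow> bool" where
  "ornament_at v S \<longleftrightarrow> v \<in> S \<and> (\<forall>x\<in>S. x \<preceq> v \<and> (x \<noteq> v \<longrightarrow> p x \<in> S))"

abbreviation induced :: "'a set \<Rightarrow> ('a \<times> 'a) set" where
  "induced S \<equiv> (E \<union> E\<inverse>) \<inter> (S \<times> S)"

lemma induced_walk_below:
  assumes "(x, y) \<in> (induced S)\<^sup>*" "x \<in> V" "x \<noteq> r \<longrightarrow> p x \<notin> S"
  shows "y \<preceq> x"
  using assms(1)
proof (induction rule: rtrancl_induct)
  case base
  show ?case using assms(2) by (rule tle_refl)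
next
  case (step z z')
  then consider "z \<in> V" "z \<noteq> r" "z' = p z" "z' \<in> S" | "z' \<in> V" "z' \<noteq> r" "z = p z'"
    using edge_iff by auto
  then show ?case
  proof cases
    case 1
    then have "z \<noteq> x" using assms(3) by auto
    then show ?thesis using 1 step.IH parent_tle_of_less by auto
  next
    case 2
    then show ?thesis using step.IH tle_parent tle_trans by blast
  qed
qed

lemma ornament_at_convex:
  assumes "ornament_at v S" "x \<in> S" "x \<preceq> y" "y \<preceq> v"
  shows "y \<in> S"
proof -
  have "(x, y) \<in> E\<^sup>*" using assms(3) unfolding tree_le_def by auto
  then have "x \<in> S \<longrightarrow> y \<in> S"
  proof (induction rule: converse_rtrancl_induct)
    case base
    then show ?case by blast
  next
    case (step z z')
    have "(z, y) \<in> E\<^sup>*" using step.hyps by (rule converse_rtrancl_into_rtrancl)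
    then have "z = v \<Longrightarrow> y = v"
      using assms(4) tle_antisym tle_in_V unfolding tree_le_def by blast
    moreover have "z' = p z" using step.hyps(1) edge_iff by auto
    ultimately show ?case using step.IH assms(1) unfolding ornament_at_def by auto
  qed
  then show ?thesis using assms(2) by blast
qed

lemma ornament_at_connected:
  assumes "ornament_at v S" "x \<in> S"
  shows "(x, v) \<in> (induced S)\<^sup>* \<and> (v, x) \<in> (induced S)\<^sup>*"
proof -
  have "(x, v) \<in> E\<^sup>*" using assms unfolding ornament_at_def tree_le_def by auto
  then have "x \<in> S \<longrightarrow> (x, v) \<in> (induced S)\<^sup>* \<and> (v, x) \<in> (induced S)\<^sup>*"
  proof (induction rule: converse_rtrancl_induct)
    case base
    then show ?case by blast
  next
    case (step z z')
    show ?case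
    proof (intro impI)
      assume "z \<in> S"
      show "(z, v) \<in> (induced S)\<^sup>* \<and> (v, z) \<in> (induced S)\<^sup>*"
      proof (cases "z = v")
        case False
        then have "z' \<in> S" using \<open>z \<in> S\<close> step.hyps(1) assms(1) edge_iff
          unfolding ornament_at_def by auto
        then have "(z, z') \<in> induced S" "(z', z) \<in> induced S"
          using \<open>z \<in> S\<close> step.hyps(1) by auto
        then show ?thesis using step.IH \<open>z' \<in> S\<close>
          by (meson converse_rtrancl_into_rtrancl rtrancl_into_rtrancl)
      qed simp
    qed
  qed
  then show ?thesis using assms(2) by blast
qed

lemma ornament_iff_ornament_at:
  assumes "v \<in> V"
  shows "ornament V r p S \<and> {u \<in> S. \<forall>w\<in>S. u \<preceq> w \<longrightarrow> w = u} = {v} \<longleftrightarrow> ornament_at v S"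
proof
  assume "ornament V r p S \<and> {u \<in> S. \<forall>w\<in>S. u \<preceq> w \<longrightarrow> w = u} = {v}"
  then have "v \<in> S" and v_max: "\<And>w. w \<in> S \<Longrightarrow> v \<preceq> w \<Longrightarrow> w = v"
    and "S \<subseteq> V" and connected: "\<And>x y. x \<in> S \<Longrightarrow> y \<in> S \<Longrightarrow> (x, y) \<in> (induced S)\<^sup>*"
    unfolding ornament_def by blast+
  have "v \<noteq> r \<longrightarrow> p v \<notin> S"
  proof (intro impI notI)
    assume "v \<noteq> r" "p v \<in> S"
    then have "p v = v" using v_max tle_parent assms by blast
    then have "(v, v) \<in> E\<^sup>+" using \<open>v \<noteq> r\<close> assms edge_iff by (metis r_into_trancl')
    then show False using no_cycle by blast
  qed
  then have below: "x \<preceq> v" if "x \<in> S" for x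
    using induced_walk_below connected \<open>v \<in> S\<close> that assms by blast
  have "p x \<in> S" if "x \<in> S" "x \<noteq> v" for x
  proof (rule ccontr)
    assume "p x \<notin> S"
    then have "v \<preceq> x"
      using induced_walk_below connected \<open>v \<in> S\<close> that \<open>S \<subseteq> V\<close> by blast
    then show False using below tle_antisym that by blast
  qed
  then show "ornament_at v S" unfolding ornament_at_def using \<open>v \<in> S\<close> below by blast
next
  assume S: "ornament_at v S"
  have "S \<subseteq> V" using S tle_in_V unfolding ornament_at_def by blast
  moreover have "(x, y) \<in> (induced S)\<^sup>*" if "x \<in> S" "y \<in> S" for x y
    using ornament_at_connected[OF S] that by (meson rtrancl_trans)
  moreover have "{u \<in> S. \<forall>w\<in>S. u \<preceq> w \<longrightarrow> w = u} = {v}"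
    using S tle_antisym unfolding ornament_at_def by blast
  ultimately show "ornament V r p S \<and> {u \<in> S. \<forall>w\<in>S. u \<preceq> w \<longrightarrow> w = u} = {v}"
    using S unfolding ornament_def ornament_at_def by blast
qed

definition ornament_system :: "('a \<Rightarrow> 'a set) \<Rightarrow> bool" where
  "ornament_system d \<longleftrightarrow> (\<forall>v\<in>V. ornament_at v (d v)) \<and> (\<forall>v. \<forall>w\<in>d v. d w \<subseteq> d v)
     \<and> (\<forall>v. v \<notin> V \<longrightarrow> d v = {})"

lemma ornament_system_self: "ornament_system d \<Longrightarrow> v \<in> V \<Longrightarrow> v \<in> d v"
  unfolding ornament_system_def ornament_at_def by blast

lemma ornament_system_below: "ornament_system d \<Longrightarrow> x \<in> d v \<Longrightarrow> x \<preceq> v"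
  unfolding ornament_system_def ornament_at_def by blast

lemma ornament_system_parent:
  "ornament_system d \<Longrightarrow> x \<in> d v \<Longrightarrow> x \<noteq> v \<Longrightarrow> p x \<in> d v"
  unfolding ornament_system_def ornament_at_def by blast

lemma ornament_system_trans: "ornament_system d \<Longrightarrow> w \<in> d v \<Longrightarrow> d w \<subseteq> d v"
  unfolding ornament_system_def by blast

lemma ornament_system_outside: "ornament_system d \<Longrightarrow> v \<notin> V \<Longrightarrow> d v = {}"
  unfolding ornament_system_def by blast

lemma ornament_system_convex:
  "ornament_system d \<Longrightarrow> x \<in> d v \<Longrightarrow> x \<preceq> w \<Longrightarrow> w \<preceq> v \<Longrightarrow> w \<in> d v"
  using ornament_at_convex tle_in_V unfolding ornament_system_def by blast

text \<open>For ornaments shaped like subtrees, nestedness amounts to transitivity: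
  two ornaments that meet have comparable tops, and the lower top lies in the higher ornament.\<close>

lemma ornamentation_iff_ornament_system: "ornamentation V r p d \<longleftrightarrow> ornament_system d"
proof
  assume d: "ornamentation V r p d"
  have at: "\<forall>v\<in>V. ornament_at v (d v)"
    using d ornament_iff_ornament_at unfolding ornamentation_def by simp
  have nested: "\<forall>v\<in>V. \<forall>v'\<in>V. d v \<subseteq> d v' \<or> d v' \<subseteq> d v \<or> d v \<inter> d v' = {}"
    and outside: "\<forall>v. v \<notin> V \<longrightarrow> d v = {}"
    using d unfolding ornamentation_def by blast+
  have "d w \<subseteq> d v" if wv: "w \<in> d v" for v w
  proof -
    have "v \<in> V" using wv outside by blast
    then have "w \<preceq> v" using at wv unfolding ornament_at_def by blast
    then have "w \<in> V" using tle_in_V by blast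
    then have "w \<in> d w" using at unfolding ornament_at_def by blast
    moreover have "d v \<subseteq> d w \<or> d w \<subseteq> d v \<or> d v \<inter> d w = {}"
      using nested \<open>v \<in> V\<close> \<open>w \<in> V\<close> by simp
    ultimately consider "d w \<subseteq> d v" | "d v \<subseteq> d w"
      using wv by auto
    then show ?thesis
    proof cases
      case 2
      then have "v \<preceq> w" using at \<open>v \<in> V\<close> \<open>w \<in> V\<close> unfolding ornament_at_def by blast
      then show ?thesis using \<open>w \<preceq> v\<close> tle_antisym by blast
    qed
  qed
  then show "ornament_system d" using at outside unfolding ornament_system_def by blast
next
  assume d: "ornament_system d"
  have "d v \<subseteq> d v' \<or> d v' \<subseteq> d v \<or> d v \<inter> d v' = {}" for v v'
  proof (cases "d v \<inter> d v' = {}")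
    case False
    then obtain z where z: "z \<in> d v" "z \<in> d v'" by blast
    then have "v \<preceq> v' \<or> v' \<preceq> v"
      using ornament_system_below[OF d] tle_upper_linear by blast
    then have "v \<in> d v' \<or> v' \<in> d v"
      using z ornament_system_below[OF d] ornament_system_convex[OF d] by blast
    then show ?thesis using ornament_system_trans[OF d] by blast
  qed blast
  moreover have "\<forall>v\<in>V. ornament V r p (d v) \<and> {u \<in> d v. \<forall>w\<in>d v. u \<preceq> w \<longrightarrow> w = u} = {v}"
    using d ornament_iff_ornament_at unfolding ornament_system_def by simp
  ultimately show "ornamentation V r p d"
    using ornament_system_outside[OF d] unfolding ornamentation_def by blast
qed

lemma mem_ornamentations: "d \<in> ornamentations V r p \<longleftrightarrow> ornament_system d"
  unfolding ornamentations_def by (simp add: ornamentation_iff_ornament_system)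

lemma orn_le_iff_le: "ornament_system d \<Longrightarrow> orn_le V d e \<longleftrightarrow> d \<le> e"
  unfolding orn_le_def le_fun_def using ornament_system_outside by fastforce

lemma finite_ornament_systems: "finite {d. ornament_system d}"
proof (rule finite_subset)
  show "{d. ornament_system d} \<subseteq> {d. \<forall>v. (v \<in> V \<longrightarrow> d v \<in> Pow V) \<and> (v \<notin> V \<longrightarrow> d v = {})}"
    using ornament_system_below ornament_system_outside tle_in_V by blast
  show "finite {d. \<forall>v. (v \<in> V \<longrightarrow> d v \<in> Pow V) \<and> (v \<notin> V \<longrightarrow> d v = {})}"
    using finite_V by (intro finite_set_of_finite_funs) auto
qed

lemma ornament_system_Inf:
  assumes "Z \<noteq> {}" and Z: "\<And>z. z \<in> Z \<Longrightarrow> ornament_system z"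
  shows "ornament_system (Inf Z)"
proof -
  obtain z0 where "z0 \<in> Z" using assms(1) by blast
  have "ornament_at v (\<Inter>z\<in>Z. z v)" if "v \<in> V" for v
    unfolding ornament_at_def
  proof (intro conjI ballI impI INT_I)
    show "v \<in> z v" if "z \<in> Z" for z
      using ornament_system_self[OF Z[OF that] \<open>v \<in> V\<close>] .
    show "x \<preceq> v" if "x \<in> (\<Inter>z\<in>Z. z v)" for x
      using that \<open>z0 \<in> Z\<close> ornament_system_below[OF Z[OF \<open>z0 \<in> Z\<close>]] by blast
    show "p x \<in> z v" if "x \<in> (\<Inter>z\<in>Z. z v)" "x \<noteq> v" "z \<in> Z" for x z
      using that ornament_system_parent[OF Z[OF \<open>z \<in> Z\<close>]] by blast
  qed
  moreover have "(\<Inter>z\<in>Z. z w) \<subseteq> (\<Inter>z\<in>Z. z v)" if "w \<in> (\<Inter>z\<in>Z. z v)" for v w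
    using that ornament_system_trans[OF Z] by blast
  moreover have "(\<Inter>z\<in>Z. z v) = {}" if "v \<notin> V" for v
    using ornament_system_outside[OF Z[OF \<open>z0 \<in> Z\<close>] that] \<open>z0 \<in> Z\<close> by blast
  ultimately show ?thesis unfolding ornament_system_def by simp
qed

lemma ornament_system_inf:
  assumes "ornament_system d" "ornament_system e"
  shows "ornament_system (inf d e)"
proof -
  have "ornament_system (Inf {d, e})" using assms by (intro ornament_system_Inf) auto
  then show ?thesis by simp
qed

definition pre_ornament_system :: "('a \<Rightarrow> 'a set) \<Rightarrow> bool" where
  "pre_ornament_system S \<longleftrightarrow> (\<forall>w. \<forall>x\<in>S w. x \<preceq> w \<and> (x \<noteq> w \<longrightarrow> p x \<in> S w))"

lemma pre_ornament_system_if_ornament_system: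
  "ornament_system d \<Longrightarrow> pre_ornament_system d"
  unfolding pre_ornament_system_def
  using ornament_system_below ornament_system_parent by blast

lemma pre_ornament_system_Sup:
  "(\<And>z. z \<in> Z \<Longrightarrow> pre_ornament_system z) \<Longrightarrow> pre_ornament_system (Sup Z)"
  unfolding pre_ornament_system_def by simp blast

lemma pre_ornament_system_sup:
  "ornament_system d \<Longrightarrow> ornament_system e \<Longrightarrow> pre_ornament_system (sup d e)"
  using pre_ornament_system_if_ornament_system unfolding pre_ornament_system_def by simp blast

inductive_set orn_closure :: "('a \<Rightarrow> 'a set) \<Rightarrow> 'a \<Rightarrow> 'a set" for S :: "'a \<Rightarrow> 'a set" and v :: 'a
where
  top: "v \<in> V \<Longrightarrow> v \<in> orn_closure S v"
| step: "w \<in> orn_closure S v \<Longrightarrow> x \<in> S w \<Longrightarrow> x \<in> orn_closure S v"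

lemma orn_closure_below:
  assumes "pre_ornament_system S" "x \<in> orn_closure S v"
  shows "x \<preceq> v"
  using assms(2)
proof (induction rule: orn_closure.induct)
  case top
  then show ?case by (rule tle_refl)
next
  case (step w x)
  then show ?case using assms(1) tle_trans unfolding pre_ornament_system_def by blast
qed

lemma orn_closure_parent:
  assumes "pre_ornament_system S" "x \<in> orn_closure S v" "x \<noteq> v"
  shows "p x \<in> orn_closure S v"
  using assms(2,3)
proof (induction rule: orn_closure.induct)
  case (step w x)
  then show ?case
    using assms(1) orn_closure.step unfolding pre_ornament_system_def by (cases "x = w") auto
qed simp

lemma orn_closure_trans: "y \<in> orn_closure S w \<Longrightarrow> w \<in> orn_closure S v \<Longrightarrow> y \<in> orn_closure S v"
  by (induction rule: orn_closure.induct) (auto intro: orn_closure.step)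

lemma ornament_system_orn_closure:
  assumes "pre_ornament_system S"
  shows "ornament_system (orn_closure S)"
proof -
  have "ornament_at v (orn_closure S v)" if "v \<in> V" for v
    unfolding ornament_at_def
    using that orn_closure.top orn_closure_below[OF assms] orn_closure_parent[OF assms] by blast
  moreover have "orn_closure S v = {}" if "v \<notin> V" for v
    using that orn_closure_below[OF assms] tle_in_V by blast
  ultimately show ?thesis unfolding ornament_system_def using orn_closure_trans by blast
qed

lemma orn_closure_upper:
  assumes "pre_ornament_system S"
  shows "S \<le> orn_closure S"
proof (intro le_funI subsetI)
  fix v x
  assume "x \<in> S v"
  then have "v \<in> V" using assms tle_in_V unfolding pre_ornament_system_def by blast
  then show "x \<in> orn_closure S v" by (rule orn_closure.step[where S = S, OF orn_closure.top \<open>x \<in> S v\<close>])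
qed

lemma orn_closure_least:
  assumes "ornament_system d" "S \<le> d"
  shows "orn_closure S \<le> d"
proof (intro le_funI subsetI)
  fix v x
  assume "x \<in> orn_closure S v"
  then show "x \<in> d v"
  proof (induction rule: orn_closure.induct)
    case top
    then show ?case by (rule ornament_system_self[OF assms(1)])
  next
    case (step w x)
    then show ?case using assms(2) ornament_system_trans[OF assms(1)] unfolding le_fun_def by blast
  qed
qed

lemma orn_closure_ornament_system: "ornament_system d \<Longrightarrow> orn_closure d = d"
  using orn_closure_least orn_closure_upper pre_ornament_system_if_ornament_system
  by (simp add: order_antisym)

lemma orn_closure_last_step:
  "x \<in> orn_closure S v \<Longrightarrow> x = v \<or> (\<exists>w\<in>orn_closure S v. w \<noteq> x \<and> x \<in> S w)"
proof (induction rule: orn_closure.induct)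
  case (step w x)
  then show ?case by (cases "w = x") blast+
qed simp

lemma orn_le_antisym:
  "\<forall>d\<in>ornamentations V r p. \<forall>e\<in>ornamentations V r p. orn_le V d e \<and> orn_le V e d \<longrightarrow> d = e"
  by (simp add: mem_ornamentations orn_le_iff_le antisym)

lemma is_meet_ornamentations_iff:
  assumes "ornament_system d" "ornament_system e"
  shows "is_meet (ornamentations V r p) (orn_le V) d e m \<longleftrightarrow> m = inf d e"
proof -
  have "is_meet (ornamentations V r p) (orn_le V) d e (inf d e)"
    using ornament_system_inf[OF assms]
    by (simp add: is_meet_def mem_ornamentations orn_le_iff_le)
  then show ?thesis using is_meet_unique[OF orn_le_antisym] by blast
qed

lemma is_join_ornamentations_iff:
  assumes "ornament_system d" "ornament_system e"
  shows "is_join (ornamentations V r p) (orn_le V) d e j \<longleftrightarrow> j = orn_closure (sup d e)"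
proof -
  have pre: "pre_ornament_system (sup d e)" using pre_ornament_system_sup[OF assms] .
  have "is_join (ornamentations V r p) (orn_le V) d e (orn_closure (sup d e))"
    using assms ornament_system_orn_closure[OF pre] orn_closure_upper[OF pre]
      orn_closure_least[where S = "sup d e"]
    by (auto simp add: is_join_def mem_ornamentations orn_le_iff_le)
  then show ?thesis using is_join_unique[OF orn_le_antisym] by blast
qed

lemma finite_lattice_ornamentations: "finite_lattice (ornamentations V r p) (orn_le V)"
proof -
  have "ornament_system (orn_closure bot)"
    by (rule ornament_system_orn_closure) (simp add: pre_ornament_system_def)
  then show ?thesis
    unfolding finite_lattice_def
    using finite_ornament_systems is_meet_ornamentations_iff is_join_ornamentations_iff
    by (auto simp add: mem_ornamentations orn_le_iff_le ornamentations_def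
        ornamentation_iff_ornament_system)
qed

text \<open>In a chain of closure steps ending inside b v, every node stays
  in b v by convexity, hence in a v, hence in z v, so the next node lies in z v \<inter> b v = a v.\<close>

lemma meet_semidistributive:
  assumes a: "ornament_system a" and b: "ornament_system b"
    and Z: "\<And>z. z \<in> Z \<Longrightarrow> ornament_system z \<and> inf z b = a"
  shows "inf (orn_closure (Sup Z)) b \<le> a"
proof -
  have pre: "pre_ornament_system (Sup Z)"
    using Z pre_ornament_system_if_ornament_system by (blast intro: pre_ornament_system_Sup)
  have "x \<in> orn_closure (Sup Z) v \<Longrightarrow> x \<in> b v \<Longrightarrow> x \<in> a v" for x v
  proof (induction rule: orn_closure.induct)
    case top
    then show ?case by (blast intro: ornament_system_self[OF a])
  next
    case (step w x)
    then obtain z where "z \<in> Z" "x \<in> z w" by auto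
    then have z: "ornament_system z" and a_eq: "inf z b = a" using Z by blast+
    have "w \<preceq> v" using orn_closure_below[OF pre step.hyps(1)] .
    then have "w \<in> b v"
      using ornament_system_convex[OF b \<open>x \<in> b v\<close>] ornament_system_below[OF z \<open>x \<in> z w\<close>] by blast
    then have "w \<in> z v" using step.IH a_eq by auto
    then have "x \<in> z v" using ornament_system_trans[OF z] \<open>x \<in> z w\<close> by blast
    then show "x \<in> a v" using \<open>x \<in> b v\<close> a_eq by auto
  qed
  then show ?thesis by (auto simp: le_fun_def)
qed

lemma card_interval_less:
  assumes "x \<preceq> x'" "x' \<preceq> u'" "u' \<preceq> u" "x' \<noteq> x \<or> u' \<noteq> u"
  shows "card {y. x' \<preceq> y \<and> y \<preceq> u'} < card {y. x \<preceq> y \<and> y \<preceq> u}"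
proof (rule psubset_card_mono)
  show "finite {y. x \<preceq> y \<and> y \<preceq> u}"
    using finite_V tle_in_V by (blast intro: finite_subset)
  have "x \<preceq> u" using assms tle_trans by blast
  then show "{y. x' \<preceq> y \<and> y \<preceq> u'} \<subset> {y. x \<preceq> y \<and> y \<preceq> u}"
    using assms tle_trans tle_antisym tle_in_V tle_refl by (smt (verit) mem_Collect_eq psubsetI subsetI)
qed

lemma orn_closure_sup_last_step:
  assumes "ornament_system d" "ornament_system e" "x \<in> orn_closure (sup d e) u" "x \<noteq> u"
  obtains w where "w \<in> orn_closure (sup d e) u" "w \<noteq> x" "x \<preceq> w" "x \<in> d w \<or> x \<in> e w"
  using orn_closure_last_step[OF assms(3)] assms ornament_system_below by fastforce

text \<open>Unless x \<in> z u for all z \<in> Z, pick z with x \<notin> z u; the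
  last closure step reaching x in orn_closure (sup z a) u comes from some w with x < w \<le> u, and
  w \<in> K u by induction on [w, u]. If the step is from a, then x \<in> K w; if it is from z, then
  w \<noteq> u and x \<in> K w by induction on [x, w].\<close>

lemma join_semidistributive:
  assumes a: "ornament_system a" and b: "ornament_system b" and "Z \<noteq> {}"
    and Z: "\<And>z. z \<in> Z \<Longrightarrow> ornament_system z \<and> orn_closure (sup z a) = b"
  shows "b \<le> orn_closure (sup (Inf Z) a)"
proof -
  define K where "K = orn_closure (sup (Inf Z) a)"
  have pre: "pre_ornament_system (sup (Inf Z) a)"
    using ornament_system_Inf[OF \<open>Z \<noteq> {}\<close>] Z a pre_ornament_system_sup by blast
  have K: "ornament_system K" and upper: "sup (Inf Z) a \<le> K"
    unfolding K_def using ornament_system_orn_closure[OF pre] orn_closure_upper[OF pre] by auto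
  have z_le_b: "z \<le> b" if "z \<in> Z" for z
    using Z[OF that] orn_closure_upper[OF pre_ornament_system_sup[OF _ a]] by fastforce
  have "x \<in> b u \<Longrightarrow> x \<in> K u" for x u
  proof (induction "card {y. x \<preceq> y \<and> y \<preceq> u}" arbitrary: x u rule: less_induct)
    case less
    have "x \<preceq> u" using ornament_system_below[OF b less.prems] .
    show ?case
    proof (cases "x = u \<or> (\<forall>z\<in>Z. x \<in> z u)")
      case True
      then show ?thesis
      proof
        assume "x = u"
        then show ?thesis unfolding K_def using orn_closure.top tle_in_V[OF \<open>x \<preceq> u\<close>] by blast
      next
        assume "\<forall>z\<in>Z. x \<in> z u"
        then show ?thesis using upper unfolding le_fun_def by simp blast
      qed
    next
      case False
      then obtain z where "z \<in> Z" "x \<notin> z u" "x \<noteq> u" by blast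
      have z: "ornament_system z" and "orn_closure (sup z a) = b" using Z[OF \<open>z \<in> Z\<close>] by auto
      then obtain w where "w \<in> b u" "w \<noteq> x" "x \<preceq> w" and xw: "x \<in> z w \<or> x \<in> a w"
        using orn_closure_sup_last_step[OF z a] less.prems \<open>x \<noteq> u\<close> by metis
      have "w \<preceq> u" using ornament_system_below[OF b \<open>w \<in> b u\<close>] .
      have "w \<in> K u"
        using less.hyps[OF card_interval_less] \<open>w \<in> b u\<close> \<open>x \<preceq> w\<close> \<open>w \<preceq> u\<close> \<open>w \<noteq> x\<close>
          tle_in_V tle_refl by blast
      then have Kw: "K w \<subseteq> K u" using ornament_system_trans[OF K] by blast
      from xw show ?thesis
      proof
        assume "x \<in> z w"
        then have "w \<noteq> u" "x \<in> b w" using \<open>x \<notin> z u\<close> z_le_b[OF \<open>z \<in> Z\<close>] by (auto simp: le_fun_def)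
        then have "x \<in> K w"
          using less.hyps[OF card_interval_less] \<open>x \<preceq> w\<close> \<open>w \<preceq> u\<close> tle_in_V tle_refl by blast
        then show ?thesis using Kw by blast
      next
        assume "x \<in> a w"
        then show ?thesis using upper Kw unfolding le_fun_def by auto
      qed
    qed
  qed
  then show ?thesis unfolding K_def by (auto simp: le_fun_def)
qed

lemma greatest_meet_eq:
  assumes a: "ornament_system a" and b: "ornament_system b" and "a \<le> b"
  defines "Z \<equiv> {z. ornament_system z \<and> inf z b = a}"
  shows "\<exists>m\<in>Z. \<forall>z\<in>Z. z \<le> m"
proof -
  define M where "M = orn_closure (Sup Z)"
  have pre: "pre_ornament_system (Sup Z)"
    unfolding Z_def using pre_ornament_system_if_ornament_system
    by (blast intro: pre_ornament_system_Sup)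
  have upper: "z \<le> M" if "z \<in> Z" for z
    unfolding M_def using order_trans[OF Sup_upper[OF that] orn_closure_upper[OF pre]] .
  have "a \<in> Z" unfolding Z_def using a \<open>a \<le> b\<close> by (simp add: inf_absorb1)
  then have "inf M b = a"
    using upper meet_semidistributive[OF a b, of Z] \<open>a \<le> b\<close>
    unfolding M_def Z_def by (simp add: antisym)
  then have "M \<in> Z" using ornament_system_orn_closure[OF pre] by (simp add: Z_def M_def)
  then show ?thesis using upper by blast
qed

lemma least_join_eq:
  assumes a: "ornament_system a" and b: "ornament_system b" and "a \<le> b"
  defines "Z \<equiv> {z. ornament_system z \<and> orn_closure (sup z a) = b}"
  shows "\<exists>m\<in>Z. \<forall>z\<in>Z. m \<le> z"
proof -
  have "b \<in> Z"
    unfolding Z_def using b \<open>a \<le> b\<close> orn_closure_ornament_system by (simp add: sup_absorb1)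
  then have "Z \<noteq> {}" by blast
  have Inf: "ornament_system (Inf Z)"
    using ornament_system_Inf[OF \<open>Z \<noteq> {}\<close>] unfolding Z_def by blast
  have "orn_closure (sup (Inf Z) a) \<le> b"
    using orn_closure_least[OF b] Inf_lower[OF \<open>b \<in> Z\<close>] \<open>a \<le> b\<close> by simp
  then have "orn_closure (sup (Inf Z) a) = b"
    using join_semidistributive[OF a b \<open>Z \<noteq> {}\<close>] unfolding Z_def by (simp add: antisym)
  then have "Inf Z \<in> Z" using Inf by (simp add: Z_def)
  then show ?thesis using Inf_lower by blast
qed

end

theorem theorem6p2:
  fixes V :: "'a set" and r :: 'a and p :: "'a \<Rightarrow> 'a"
  assumes "rooted_tree V r p"
  shows "semidistributive (ornamentations V r p) (orn_le V)"
proof -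
  interpret rtree V r p by (rule rtree.intro) (rule assms)
  let ?L = "ornamentations V r p"
  have "(\<exists>m\<in>{z\<in>?L. is_meet ?L (orn_le V) z b a}. \<forall>z\<in>{z\<in>?L. is_meet ?L (orn_le V) z b a}. orn_le V z m)
      \<and> (\<exists>m\<in>{z\<in>?L. is_join ?L (orn_le V) z a b}. \<forall>z\<in>{z\<in>?L. is_join ?L (orn_le V) z a b}. orn_le V m z)"
    if "a \<in> ?L" "b \<in> ?L" "orn_le V a b" for a b
  proof -
    have a: "ornament_system a" and b: "ornament_system b" and "a \<le> b"
      using that by (simp_all add: mem_ornamentations orn_le_iff_le)
    have "{z\<in>?L. is_meet ?L (orn_le V) z b a} = {z. ornament_system z \<and> inf z b = a}"
      using is_meet_ornamentations_iff[OF _ b] by (auto simp: mem_ornamentations)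
    moreover have "{z\<in>?L. is_join ?L (orn_le V) z a b} = {z. ornament_system z \<and> orn_closure (sup z a) = b}"
      using is_join_ornamentations_iff[OF _ a] by (auto simp: mem_ornamentations)
    ultimately show ?thesis
      using greatest_meet_eq[OF a b \<open>a \<le> b\<close>] least_join_eq[OF a b \<open>a \<le> b\<close>]
      by (simp add: orn_le_iff_le)
  qed
  then show ?thesis unfolding semidistributive_def using finite_lattice_ornamentations by blast
qed

end
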